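(* Let $X\subset\mathbb{R}^2$ be a finite set of at least two distinct points. Then $$\lim_{k\to\infty}\frac{\ell^k_{\mathrm{MSTH}}(X)}{\ell^k_{\mathrm{OPT}}(X)}=\frac{L_{\mathrm{MST}}(X)}{L_{\mathrm{SMT}}(X)}.$$
   Context: All lengths are Euclidean. For a tree $T$ embedded in the plane, $\ell_{\max}(T)$ is the length of its longest edge. For a positive integer $k$, $\mathcal{C}(X,k)$ is the set of all trees whose vertex set is $X\cup S$ for some set $S\subset\mathbb{R}^2$ of at most $k$ additional points. $\ell^k_{\mathrm{OPT}}(X)=\inf\{\ell_{\max}(T): T\in\mathcal{C}(X,k)\}$ is the optimal bottleneck length. Let $e_1,\dots,e_{n-1}$ be the edges of a Euclidean minimum spanning tree on $X$ (the multiset of edge lengths does not depend on the choice of MST). The minimum spanning tree heuristic (MSTH) places $k$ degree-two Steiner points ("beads") on these edges, $n_i\ge 0$ equally spaced beads on $e_i$ with $\sum_i n_i=k$, chosen so as to minimise the longest resulting edge; thus $\ell^k_{\mathrm{MSTH}}(X)=\min\{\max_i |e_i|/(n_i+1): n_i\in\mathbb{Z}_{\ge0},\ \sum_i n_i=k\}$. $L_{\mathrm{MST}}(X)$ is the total length of a minimum spanning tree on $X$, and $L_{\mathrm{SMT}}(X)$ is the total length of a Steiner minimal tree on $X$, i.e. the infimum of total edge length over all trees whose vertex set contains $X$ together with any finite number of additional points of the plane. *)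

theory Defs
  imports "HOL-Analysis.Analysis"
begin

type_synonym pt = "real^2"

text \<open>Geometric graphs in the plane: vertices are points, edges are 2-element sets of
  points; the length of an edge is the Euclidean distance of its endpoints.\<close>

definition edge_len :: "pt set \<Rightarrow> real" where
  "edge_len e = diameter e"

definition adj :: "pt set set \<Rightarrow> pt \<Rightarrow> pt \<Rightarrow> bool" where
  "adj E u v \<longleftrightarrow> {u, v} \<in> E"

definition is_graph :: "pt set \<Rightarrow> pt set set \<Rightarrow> bool" where
  "is_graph V E \<longleftrightarrow> finite V \<and> E \<subseteq> {{u, v} | u v. u \<in> V \<and> v \<in> V \<and> u \<noteq> v}"

definition connected_graph :: "pt set \<Rightarrow> pt set set \<Rightarrow> bool" where
  "connected_graph V E \<longleftrightarrow> (\<forall>u\<in>V. \<forall>v\<in>V. (adj E)\<^sup>*\<^sup>* u v)"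

text \<open>A tree: a connected graph that is acyclic, i.e. every edge is a bridge
  (its removal disconnects its two endpoints).\<close>
definition is_tree :: "pt set \<Rightarrow> pt set set \<Rightarrow> bool" where
  "is_tree V E \<longleftrightarrow> is_graph V E \<and> connected_graph V E \<and>
     (\<forall>u v. {u, v} \<in> E \<longrightarrow> \<not> (adj (E - {{u, v}}))\<^sup>*\<^sup>* u v)"

definition lmax :: "pt set set \<Rightarrow> real" where
  "lmax E = Max (edge_len ` E)"

definition total_len :: "pt set set \<Rightarrow> real" where
  "total_len E = (\<Sum>e\<in>E. edge_len e)"

text \<open>Optimal bottleneck length with at most k Steiner points.\<close>
definition l_opt :: "pt set \<Rightarrow> nat \<Rightarrow> real" where
  "l_opt X k = Inf {lmax E | V E S. is_tree V E \<and> V = X \<union> S \<and> finite S \<and> card S \<le> k}"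

definition is_MST :: "pt set \<Rightarrow> pt set set \<Rightarrow> bool" where
  "is_MST X E \<longleftrightarrow> is_tree X E \<and> (\<forall>E'. is_tree X E' \<longrightarrow> total_len E \<le> total_len E')"

definition some_MST :: "pt set \<Rightarrow> pt set set" where
  "some_MST X = (SOME E. is_MST X E)"

text \<open>MST heuristic: distribute k beads over the MST edges (the minimum is attained,
  so Inf is the minimum).\<close>
definition l_msth :: "pt set \<Rightarrow> nat \<Rightarrow> real" where
  "l_msth X k = Inf {Max ((\<lambda>e. edge_len e / (real (n e) + 1)) ` some_MST X) | n :: pt set \<Rightarrow> nat.
                       (\<Sum>e\<in>some_MST X. n e) = k}"

definition L_MST :: "pt set \<Rightarrow> real" where
  "L_MST X = total_len (some_MST X)"

definition L_SMT :: "pt set \<Rightarrow> real" where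
  "L_SMT X = Inf {total_len E | V E. is_tree V E \<and> X \<subseteq> V}"

end

theory Submission
  imports Defs "HOL-Real_Asymp.Real_Asymp"
begin

text \<open>Both bottleneck lengths decay like \<open>1/k\<close>, so the theorem amounts to
  \<open>k \<cdot> l_msth X k \<longlonglongrightarrow> L_MST X\<close> and \<open>k \<cdot> l_opt X k \<longlonglongrightarrow> L_SMT X\<close>. For the heuristic,
  placing the beads on the MST edges proportionally to their lengths is optimal up to one bead
  per edge. For the optimum, a tree on at most \<open>|X| + k\<close> points has fewer than \<open>|X| + k\<close>
  edges and total length at least \<open>L_SMT X\<close>, which bounds its longest edge from below;
  conversely, cutting the edges of a nearly minimal Steiner tree into pieces of length \<open>h\<close>
  costs at most \<open>(L_SMT X + \<epsilon>) / h\<close> extra points.\<close>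

abbreviation reach :: "pt set set \<Rightarrow> pt \<Rightarrow> pt \<Rightarrow> bool" where
  "reach E \<equiv> (adj E)\<^sup>*\<^sup>*"

lemma edge_len_doubleton: "edge_len {a, b} = dist a b"
  unfolding edge_len_def
proof (rule antisym)
  show "diameter {a, b} \<le> dist a b"
    by (rule diameter_le) (auto simp: dist_norm norm_minus_commute)
  show "dist a b \<le> diameter {a, b}"
    by (rule diameter_bounded_bound) auto
qed

lemma adj_commute: "adj E u v = adj E v u"
  unfolding adj_def by (simp add: insert_commute)

lemma reach_sym: "reach E u v \<Longrightarrow> reach E v u"
proof (induction rule: rtranclp_induct)
  case (step y z)
  then show ?case by (metis adj_commute converse_rtranclp_into_rtranclp)
qed simp

lemma reach_mono: "E \<subseteq> F \<Longrightarrow> reach E u v \<Longrightarrow> reach F u v"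
  by (erule rtranclp_mono[THEN predicate2D, rotated]) (auto simp: adj_def)

lemma reach_edge: "{u, v} \<in> E \<Longrightarrow> reach E u v"
  by (simp add: adj_def r_into_rtranclp)

lemma reach_isolated:
  assumes "reach F p q" "\<forall>e\<in>F. q \<notin> e"
  shows "p = q"
  using assms by (induction rule: rtranclp_induct) (auto simp: adj_def)

lemma reach_insert_pendant:
  assumes "reach (insert {a, b} F) p q" "\<forall>e\<in>F. b \<notin> e" "a \<noteq> b" "p \<noteq> b"
  shows "if q = b then reach F p a else reach F p q"
  using assms(1)
proof (induction rule: rtranclp_induct)
  case (step y z)
  show ?case
  proof (cases "{y, z} = {a, b}")
    case True
    then have "(y = a \<and> z = b) \<or> (y = b \<and> z = a)" by (auto simp: doubleton_eq_iff)
    then show ?thesis using step.IH assms(3) by auto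
  next
    case False
    with step.hyps(2) have yz: "{y, z} \<in> F" by (auto simp: adj_def)
    then have "y \<noteq> b" "z \<noteq> b" using assms(2) by auto
    then show ?thesis using step.IH yz
      by (auto simp: adj_def intro: rtranclp.rtrancl_into_rtrancl)
  qed
qed (use assms in simp)

lemma reach_crossing_edge:
  assumes "reach E p q" "p \<in> U" "q \<notin> U"
  shows "\<exists>x y. {x, y} \<in> E \<and> x \<in> U \<and> y \<notin> U"
  using assms by (induction rule: rtranclp_induct) (auto simp: adj_def)

lemma is_graph_edgeD:
  "is_graph V E \<Longrightarrow> e \<in> E \<Longrightarrow> \<exists>u v. e = {u, v} \<and> u \<in> V \<and> v \<in> V \<and> u \<noteq> v"
  unfolding is_graph_def by blast

lemma is_graph_finite_edges:
  assumes "is_graph V E" shows "finite E"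
proof -
  have "E \<subseteq> Pow V" and "finite V" using assms unfolding is_graph_def by blast+
  then show ?thesis by (meson finite_Pow_iff finite_subset)
qed

lemma is_tree_singleton: "is_tree {x} {}"
  unfolding is_tree_def is_graph_def connected_graph_def by (auto simp: adj_def)

lemma is_tree_edges_nonempty:
  assumes "is_tree V E" "a \<in> V" "b \<in> V" "a \<noteq> b"
  shows "E \<noteq> {}"
proof
  assume "E = {}"
  moreover have "reach E a b" using assms unfolding is_tree_def connected_graph_def by blast
  ultimately show False using reach_isolated[of E a b] assms(4) by simp
qed

lemma connected_graph_insert_leaf:
  assumes c: "connected_graph U T" and a: "a \<in> U"
  shows "connected_graph (insert b U) (insert {a, b} T)"
  unfolding connected_graph_def
proof (intro ballI)
  let ?T = "insert {a, b} T"
  have U_reach: "reach ?T x y" if "x \<in> U" "y \<in> U" for x y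
    using c reach_mono[of T ?T] that unfolding connected_graph_def by blast
  have "reach ?T a b" by (rule reach_edge) simp
  then have b_reach: "reach ?T x b" "reach ?T b x" if "x \<in> U" for x
    using U_reach[OF that a] reach_sym by (meson rtranclp_trans)+
  fix u v assume "u \<in> insert b U" "v \<in> insert b U"
  then show "reach ?T u v"
    using U_reach b_reach by (cases "u = b"; cases "v = b") auto
qed

lemma is_tree_insert_leaf:
  assumes T: "is_tree U T" and a: "a \<in> U" and b: "b \<notin> U"
  shows "is_tree (insert b U) (insert {a, b} T)"
proof -
  let ?T = "insert {a, b} T"
  have g: "is_graph U T" and c: "connected_graph U T"
    and bridges: "\<forall>u v. {u, v} \<in> T \<longrightarrow> \<not> reach (T - {{u, v}}) u v"
    using T unfolding is_tree_def by auto
  have ab: "a \<noteq> b" using a b by auto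
  have b_isolated: "\<forall>e\<in>T. b \<notin> e" using g b unfolding is_graph_def by blast
  have "is_graph (insert b U) ?T"
    using g a ab unfolding is_graph_def by blast
  moreover have "\<not> reach (?T - {{u, v}}) u v" if uv: "{u, v} \<in> ?T" for u v
  proof
    assume r: "reach (?T - {{u, v}}) u v"
    show False
    proof (cases "{u, v} = {a, b}")
      case True
      then have "?T - {{u, v}} = T" using b_isolated by auto
      moreover have "b = u \<or> b = v" "u \<noteq> v" using True ab by (auto simp: doubleton_eq_iff)
      ultimately show False
        using r reach_isolated[OF r] reach_isolated[OF reach_sym[OF r]] b_isolated by auto
    next
      case False
      then have uvT: "{u, v} \<in> T" using uv by simp
      then have "u \<noteq> b" "v \<noteq> b" using b_isolated by auto
      moreover have "?T - {{u, v}} = insert {a, b} (T - {{u, v}})" using False by auto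
      ultimately have "reach (T - {{u, v}}) u v"
        using reach_insert_pendant[of a b "T - {{u, v}}" u v] r b_isolated ab by auto
      then show False using bridges uvT by blast
    qed
  qed
  ultimately show ?thesis
    using connected_graph_insert_leaf[OF c a] unfolding is_tree_def by blast
qed

lemma spanning_tree_extend:
  assumes g: "is_graph V E" and c: "connected_graph V E"
    and "U \<subseteq> V" "is_tree U T" "T \<subseteq> E" "card T + 1 = card U"
  shows "\<exists>T'. T' \<subseteq> E \<and> is_tree V T' \<and> card T' + 1 = card V"
  using assms(3-)
proof (induction "card V - card U" arbitrary: U T)
  case 0
  have "finite V" using g unfolding is_graph_def by simp
  then have "U = V" using 0 by (metis card_mono card_subset_eq diff_is_0_eq le_antisym)
  then show ?case using 0 by blast
next
  case (Suc d)
  obtain u0 where u0: "u0 \<in> U" using Suc.prems(4) by fastforce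
  obtain v0 where v0: "v0 \<in> V" "v0 \<notin> U"
    using Suc.prems(1) Suc.hyps(2) by (metis diff_self_eq_0 nat.distinct(1) subsetI subset_antisym)
  have "reach E u0 v0" using c u0 v0(1) Suc.prems(1) unfolding connected_graph_def by blast
  then obtain x y where xy: "{x, y} \<in> E" "x \<in> U" "y \<notin> U"
    using reach_crossing_edge u0 v0(2) by blast
  have "y \<in> V" using is_graph_edgeD[OF g xy(1)] by (auto simp: doubleton_eq_iff)
  have gT: "is_graph U T" using Suc.prems(2) unfolding is_tree_def by simp
  have "finite U" using gT unfolding is_graph_def by simp
  have "{x, y} \<notin> T" using is_graph_edgeD[OF gT] xy(3) by (fastforce simp: doubleton_eq_iff)
  then have "card (insert {x, y} T) = card T + 1" using is_graph_finite_edges[OF gT] by simp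
  moreover have "card (insert y U) = card U + 1" using \<open>finite U\<close> xy(3) by simp
  ultimately show ?case
    using Suc.hyps(1)[of "insert y U" "insert {x, y} T"] Suc.hyps(2) Suc.prems \<open>y \<in> V\<close> xy
      is_tree_insert_leaf[OF Suc.prems(2) xy(2,3)] by auto
qed

lemma spanning_tree_exists:
  assumes "is_graph V E" "connected_graph V E" "V \<noteq> {}"
  shows "\<exists>T. T \<subseteq> E \<and> is_tree V T \<and> card T + 1 = card V"
proof -
  obtain x where "x \<in> V" using assms(3) by auto
  then show ?thesis
    using spanning_tree_extend[OF assms(1,2), of "{x}" "{}"] is_tree_singleton by simp
qed

fun path_len :: "pt list \<Rightarrow> real" where
  "path_len (a # b # r) = dist a b + path_len (b # r)"
| "path_len _ = 0"

fun path_edges :: "pt list \<Rightarrow> pt set set" where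
  "path_edges (a # b # r) = insert {a, b} (path_edges (b # r))"
| "path_edges _ = {}"

lemma path_edges_subset_set: "e \<in> path_edges ps \<Longrightarrow> e \<subseteq> set ps"
  by (induction ps rule: path_edges.induct) auto

lemma finite_path_edges: "finite (path_edges ps)"
  by (induction ps rule: path_edges.induct) auto

lemma path_edges_append: "path_edges ys \<subseteq> path_edges (xs @ ys)"
proof (induction xs)
  case (Cons x xs)
  then show ?case by (cases "xs @ ys") auto
qed simp

lemma path_len_eq_sum: "distinct ps \<Longrightarrow> path_len ps = (\<Sum>e\<in>path_edges ps. edge_len e)"
proof (induction ps rule: path_edges.induct)
  case (1 a b r)
  have "{a, b} \<notin> path_edges (b # r)"
    using "1.prems" path_edges_subset_set by fastforce
  then show ?case using 1 finite_path_edges by (simp add: edge_len_doubleton)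
qed auto

lemma dist_le_path_len: "ps \<noteq> [] \<Longrightarrow> dist (hd ps) (last ps) \<le> path_len ps"
proof (induction ps rule: path_edges.induct)
  case (1 a b r)
  then show ?case using dist_triangle[of a "last (b # r)" b] by simp
qed auto

lemma reach_imp_simple_path:
  assumes "reach E u v"
  shows "\<exists>ps. ps \<noteq> [] \<and> hd ps = u \<and> last ps = v \<and> distinct ps \<and> path_edges ps \<subseteq> E"
  using assms
proof (induction rule: converse_rtranclp_induct)
  case base
  show ?case by (rule exI[of _ "[v]"]) simp
next
  case (step y z)
  then obtain ps where ps: "ps \<noteq> []" "hd ps = z" "last ps = v" "distinct ps" "path_edges ps \<subseteq> E"
    by blast
  show ?case
  proof (cases "y \<in> set ps")
    case True
    then obtain xs ys where "ps = xs @ y # ys" by (meson split_list)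
    then show ?thesis
      using ps path_edges_append[of "y # ys" xs] by (intro exI[of _ "y # ys"]) auto
  next
    case False
    then obtain r where "ps = z # r" using ps(1,2) by (cases ps) auto
    then show ?thesis
      using ps False step.hyps(1) by (intro exI[of _ "y # ps"]) (auto simp: adj_def)
  qed
qed

lemma edge_len_pos:
  assumes "is_graph V E" "e \<in> E" shows "0 < edge_len e"
  using is_graph_edgeD[OF assms] by (auto simp: edge_len_doubleton)

lemma dist_le_total_len:
  assumes g: "is_graph V E" and r: "reach E u v"
  shows "dist u v \<le> total_len E"
proof -
  obtain ps where ps: "ps \<noteq> []" "hd ps = u" "last ps = v" "distinct ps" "path_edges ps \<subseteq> E"
    using reach_imp_simple_path[OF r] by blast
  have "dist u v \<le> path_len ps" using dist_le_path_len[OF ps(1)] ps(2,3) by simp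
  also have "\<dots> = (\<Sum>e\<in>path_edges ps. edge_len e)" using path_len_eq_sum[OF ps(4)] .
  also have "\<dots> \<le> total_len E"
    unfolding total_len_def
    by (rule sum_mono2[OF is_graph_finite_edges[OF g] ps(5)])
       (meson edge_len_pos[OF g] less_imp_le DiffD1)
  finally show ?thesis .
qed

definition pieces :: "real \<Rightarrow> pt \<Rightarrow> pt \<Rightarrow> nat" where
  "pieces h a b = nat \<lceil>dist a b / h\<rceil>"

definition subdiv_pt :: "real \<Rightarrow> pt \<Rightarrow> pt \<Rightarrow> nat \<Rightarrow> pt" where
  "subdiv_pt h a b i = a + (real i / real (pieces h a b)) *\<^sub>R (b - a)"

definition beads :: "real \<Rightarrow> pt set \<Rightarrow> pt set" where
  "beads h e = {subdiv_pt h a b i | a b i. e = {a, b} \<and> 0 < i \<and> i < pieces h a b}"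

definition subdiv_edges :: "real \<Rightarrow> pt set set \<Rightarrow> pt set set" where
  "subdiv_edges h E =
     {{subdiv_pt h a b i, subdiv_pt h a b (Suc i)} | a b i. {a, b} \<in> E \<and> i < pieces h a b}"

lemma pieces_commute: "pieces h a b = pieces h b a"
  unfolding pieces_def by (simp add: dist_commute)

lemma pieces_bounds:
  assumes "h > 0"
  shows "dist a b / h \<le> real (pieces h a b)" "real (pieces h a b) < dist a b / h + 1"
proof -
  have "real (pieces h a b) = of_int \<lceil>dist a b / h\<rceil>"
    unfolding pieces_def using assms by simp
  then show "dist a b / h \<le> real (pieces h a b)" "real (pieces h a b) < dist a b / h + 1"
    by (simp_all add: ceiling_correct) linarith
qed

lemma pieces_pos: "h > 0 \<Longrightarrow> a \<noteq> b \<Longrightarrow> 0 < pieces h a b"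
  unfolding pieces_def by simp

lemma subdiv_pt_0: "subdiv_pt h a b 0 = a"
  unfolding subdiv_pt_def by simp

lemma subdiv_pt_last: "h > 0 \<Longrightarrow> a \<noteq> b \<Longrightarrow> subdiv_pt h a b (pieces h a b) = b"
  using pieces_pos[of h a b] unfolding subdiv_pt_def by simp

lemma dist_subdiv_pt_Suc:
  assumes "h > 0" "a \<noteq> b"
  shows "dist (subdiv_pt h a b i) (subdiv_pt h a b (Suc i)) = dist a b / real (pieces h a b)"
proof -
  have "subdiv_pt h a b (Suc i) - subdiv_pt h a b i = (1 / real (pieces h a b)) *\<^sub>R (b - a)"
    unfolding subdiv_pt_def by (simp add: add_divide_distrib scaleR_add_left)
  moreover have "dist (subdiv_pt h a b i) (subdiv_pt h a b (Suc i))
      = norm (subdiv_pt h a b (Suc i) - subdiv_pt h a b i)"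
    by (simp add: dist_norm norm_minus_commute)
  ultimately show ?thesis
    using pieces_pos[OF assms] by (simp add: dist_norm norm_minus_commute)
qed

lemma dist_subdiv_pt_Suc_le:
  assumes "h > 0" "a \<noteq> b"
  shows "dist (subdiv_pt h a b i) (subdiv_pt h a b (Suc i)) \<le> h"
  using dist_subdiv_pt_Suc[OF assms] pieces_bounds(1)[OF assms(1)] pieces_pos[OF assms] assms(1)
  by (simp add: divide_le_eq mult.commute)

lemma subdiv_pt_commute:
  assumes "h > 0" "a \<noteq> b" "i \<le> pieces h a b"
  shows "subdiv_pt h b a i = subdiv_pt h a b (pieces h a b - i)"
proof -
  let ?N = "real (pieces h a b)"
  have "subdiv_pt h b a i = b + (real i / ?N) *\<^sub>R (a - b)"
    unfolding subdiv_pt_def by (simp add: pieces_commute)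
  also have "\<dots> = a + ((?N - real i) / ?N) *\<^sub>R (b - a)" using pieces_pos[OF assms(1,2)]
    by (simp add: diff_divide_distrib scaleR_diff_left scaleR_diff_right algebra_simps)
  finally show ?thesis unfolding subdiv_pt_def using assms(3) by (simp add: of_nat_diff)
qed

lemma beads_subset:
  assumes "h > 0" "a \<noteq> b"
  shows "beads h {a, b} \<subseteq> subdiv_pt h a b ` {0<..<pieces h a b}"
proof
  fix p assume "p \<in> beads h {a, b}"
  then obtain a' b' i where p: "p = subdiv_pt h a' b' i" "{a, b} = {a', b'}" "0 < i" "i < pieces h a' b'"
    unfolding beads_def by blast
  from p(2) consider "a' = a" "b' = b" | "a' = b" "b' = a" by (auto simp: doubleton_eq_iff)
  then show "p \<in> subdiv_pt h a b ` {0<..<pieces h a b}"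
  proof cases
    case 2
    then have "p = subdiv_pt h a b (pieces h a b - i)" "pieces h a b - i \<in> {0<..<pieces h a b}"
      using p subdiv_pt_commute[OF assms, of i] pieces_commute[of h a b] by auto
    then show ?thesis by blast
  qed (use p in auto)
qed

lemma card_beads_le:
  assumes "h > 0" "a \<noteq> b"
  shows "finite (beads h {a, b})" "real (card (beads h {a, b})) \<le> edge_len {a, b} / h"
proof -
  have f: "finite (subdiv_pt h a b ` {0<..<pieces h a b})" by simp
  then show "finite (beads h {a, b})" using beads_subset[OF assms] finite_subset by blast
  have "card (beads h {a, b}) \<le> card (subdiv_pt h a b ` {0<..<pieces h a b})"
    using card_mono[OF f beads_subset[OF assms]] .
  also have "\<dots> \<le> card {0<..<pieces h a b}" by (rule card_image_le) simp
  finally have "real (card (beads h {a, b})) \<le> real (pieces h a b) - 1"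
    using pieces_pos[OF assms] by simp
  also have "\<dots> < dist a b / h" using pieces_bounds(2)[OF assms(1), of a b] by linarith
  finally show "real (card (beads h {a, b})) \<le> edge_len {a, b} / h"
    by (simp add: edge_len_doubleton)
qed

lemma subdiv_edgeD:
  assumes "is_graph V E" "e \<in> subdiv_edges h E"
  obtains a b i where "e = {subdiv_pt h a b i, subdiv_pt h a b (Suc i)}" "{a, b} \<in> E"
    "i < pieces h a b" "a \<noteq> b" "a \<in> V" "b \<in> V"
proof -
  obtain a b i where e: "e = {subdiv_pt h a b i, subdiv_pt h a b (Suc i)}" "{a, b} \<in> E"
    "i < pieces h a b"
    using assms(2) unfolding subdiv_edges_def by blast
  moreover have "a \<noteq> b \<and> a \<in> V \<and> b \<in> V"
    using is_graph_edgeD[OF assms(1) e(2)] by (auto simp: doubleton_eq_iff)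
  ultimately show ?thesis using that by blast
qed

lemma subdiv_pt_mem:
  assumes "h > 0" "{a, b} \<in> E" "a \<noteq> b" "a \<in> V" "b \<in> V" "i \<le> pieces h a b"
  shows "subdiv_pt h a b i \<in> V \<union> (\<Union>e\<in>E. beads h e)"
proof -
  consider "i = 0" | "i = pieces h a b" | "0 < i" "i < pieces h a b"
    using assms(6) by linarith
  then show ?thesis
  proof cases
    case 3
    then have "subdiv_pt h a b i \<in> beads h {a, b}" unfolding beads_def by blast
    then show ?thesis using assms(2) by blast
  qed (use assms subdiv_pt_0 subdiv_pt_last in auto)
qed

lemma reach_subdiv_pt:
  assumes "{a, b} \<in> E" "j \<le> pieces h a b"
  shows "reach (subdiv_edges h E) a (subdiv_pt h a b j)"
  using assms(2)
proof (induction j)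
  case 0
  then show ?case by (simp add: subdiv_pt_0)
next
  case (Suc j)
  have "{subdiv_pt h a b j, subdiv_pt h a b (Suc j)} \<in> subdiv_edges h E"
    unfolding subdiv_edges_def using Suc.prems assms(1) by fastforce
  then show ?case using Suc by (meson Suc_leD adj_def rtranclp.rtrancl_into_rtrancl)
qed

lemma card_beads_Union_le:
  assumes g: "is_graph V E" and h: "h > 0"
  shows "finite (\<Union>e\<in>E. beads h e)" "real (card (\<Union>e\<in>E. beads h e)) \<le> total_len E / h"
proof -
  have fE: "finite E" using is_graph_finite_edges[OF g] .
  have Ce: "finite (beads h e) \<and> real (card (beads h e)) \<le> edge_len e / h" if "e \<in> E" for e
    using is_graph_edgeD[OF g that] card_beads_le[OF h] by blast
  then show "finite (\<Union>e\<in>E. beads h e)" using fE by blast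
  have "real (card (\<Union>e\<in>E. beads h e)) \<le> (\<Sum>e\<in>E. real (card (beads h e)))"
    using card_UN_le[OF fE, of "beads h"] unfolding of_nat_sum[symmetric] of_nat_le_iff .
  also have "\<dots> \<le> (\<Sum>e\<in>E. edge_len e / h)" by (rule sum_mono) (use Ce in blast)
  also have "\<dots> = total_len E / h" unfolding total_len_def by (simp add: sum_divide_distrib)
  finally show "real (card (\<Union>e\<in>E. beads h e)) \<le> total_len E / h" .
qed

lemma subdivision_is_graph:
  assumes g: "is_graph V E" and h: "h > 0"
  shows "is_graph (V \<union> (\<Union>e\<in>E. beads h e)) (subdiv_edges h E)"
  unfolding is_graph_def
proof
  show "finite (V \<union> (\<Union>e\<in>E. beads h e))"
    using g card_beads_Union_le(1)[OF g h] unfolding is_graph_def by simp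
  show "subdiv_edges h E \<subseteq> {{u, v} |u v. u \<in> V \<union> (\<Union>e\<in>E. beads h e) \<and>
                                      v \<in> V \<union> (\<Union>e\<in>E. beads h e) \<and> u \<noteq> v}"
  proof
    fix e assume "e \<in> subdiv_edges h E"
    then obtain a b i where e: "e = {subdiv_pt h a b i, subdiv_pt h a b (Suc i)}" "{a, b} \<in> E"
      "i < pieces h a b" "a \<noteq> b" "a \<in> V" "b \<in> V"
      using subdiv_edgeD[OF g] by blast
    moreover have "subdiv_pt h a b i \<noteq> subdiv_pt h a b (Suc i)"
      using dist_subdiv_pt_Suc[OF h e(4), of i] pieces_pos[OF h e(4)] e(4) by auto
    ultimately show "e \<in> {{u, v} |u v. u \<in> V \<union> (\<Union>e\<in>E. beads h e) \<and>
                                        v \<in> V \<union> (\<Union>e\<in>E. beads h e) \<and> u \<noteq> v}"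
      using subdiv_pt_mem[OF h e(2,4,5,6), of i] subdiv_pt_mem[OF h e(2,4,5,6), of "Suc i"] e(3)
      by auto
  qed
qed

lemma subdivision_connected:
  assumes g: "is_graph V E" and c: "connected_graph V E" and h: "h > 0"
  shows "connected_graph (V \<union> (\<Union>e\<in>E. beads h e)) (subdiv_edges h E)"
proof -
  let ?E = "subdiv_edges h E"
  have reach_ends: "reach ?E a b" if "{a, b} \<in> E" for a b
  proof -
    have "a \<noteq> b" using is_graph_edgeD[OF g that] by (auto simp: doubleton_eq_iff)
    then show ?thesis using reach_subdiv_pt[OF that le_refl, of h] subdiv_pt_last[OF h] by simp
  qed
  have reach_lift: "reach E x y \<Longrightarrow> reach ?E x y" for x y
  proof (induction rule: rtranclp_induct)
    case (step y z)
    then show ?case using reach_ends by (meson adj_def rtranclp_trans)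
  qed simp
  have reach_from_V: "\<exists>a\<in>V. reach ?E a w" if w: "w \<in> V \<union> (\<Union>e\<in>E. beads h e)" for w
  proof (cases "w \<in> V")
    case False
    then obtain e where "e \<in> E" "w \<in> beads h e" using w by blast
    then obtain a b i where w_eq: "w = subdiv_pt h a b i" "{a, b} \<in> E" "i < pieces h a b"
      unfolding beads_def by blast
    moreover have "a \<in> V" using is_graph_edgeD[OF g w_eq(2)] by (auto simp: doubleton_eq_iff)
    ultimately show ?thesis using reach_subdiv_pt[of a b E i h] by auto
  qed blast
  show ?thesis
    unfolding connected_graph_def
  proof (intro ballI)
    fix u v assume "u \<in> V \<union> (\<Union>e\<in>E. beads h e)" "v \<in> V \<union> (\<Union>e\<in>E. beads h e)"
    then obtain a b where "a \<in> V" "reach ?E a u" "b \<in> V" "reach ?E b v"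
      using reach_from_V by blast
    then show "reach ?E u v"
      using c reach_lift reach_sym unfolding connected_graph_def by (meson rtranclp_trans)
  qed
qed

lemma subdivided_tree_exists:
  assumes g: "is_graph V E" and c: "connected_graph V E" and h: "h > 0" and "V \<noteq> {}"
  shows "\<exists>V' T. is_tree V' T \<and> V \<subseteq> V' \<and> real (card (V' - V)) \<le> total_len E / h \<and>
                (\<forall>e\<in>T. edge_len e \<le> h)"
proof -
  let ?B = "\<Union>e\<in>E. beads h e"
  obtain T where T: "T \<subseteq> subdiv_edges h E" "is_tree (V \<union> ?B) T"
    using spanning_tree_exists[OF subdivision_is_graph[OF g h] subdivision_connected[OF g c h]]
      assms(4) by blast
  have "card (V \<union> ?B - V) \<le> card ?B" by (rule card_mono[OF card_beads_Union_le(1)[OF g h]]) blast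
  then have "real (card (V \<union> ?B - V)) \<le> total_len E / h"
    using card_beads_Union_le(2)[OF g h] by linarith
  moreover have "edge_len e \<le> h" if "e \<in> T" for e
    using subdiv_edgeD[OF g, of e h] T(1) that dist_subdiv_pt_Suc_le[OF h]
    by (metis edge_len_doubleton subsetD)
  ultimately show ?thesis using T(2) by blast
qed

lemma two_distinct_points:
  assumes "finite X" "2 \<le> card X"
  obtains a b where "a \<in> X" "b \<in> X" "a \<noteq> b"
  using assms card_le_Suc0_iff_eq[OF assms(1)] by (metis not_less_eq_eq numeral_2_eq_2)

lemma is_MST_some_MST:
  assumes "finite X" "X \<noteq> {}"
  shows "is_MST X (some_MST X)"
proof -
  let ?K = "{{u, v} |u v. u \<in> X \<and> v \<in> X \<and> u \<noteq> v}"
  let ?A = "{E. is_tree X E}"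
  have gK: "is_graph X ?K" using assms(1) unfolding is_graph_def by blast
  have "connected_graph X ?K"
    unfolding connected_graph_def
    by (metis (mono_tags, lifting) mem_Collect_eq reach_edge rtranclp.rtrancl_refl)
  then obtain T where "is_tree X T" using spanning_tree_exists[OF gK _ assms(2)] by blast
  moreover have "finite ?A"
    using finite_subset[of ?A "Pow ?K"] is_graph_finite_edges[OF gK]
    unfolding is_tree_def is_graph_def by blast
  ultimately have "Min (total_len ` ?A) \<in> total_len ` ?A" by (intro Min_in) auto
  then obtain E0 where "E0 \<in> ?A" "Min (total_len ` ?A) = total_len E0" by (rule imageE) blast
  moreover have "Min (total_len ` ?A) \<le> total_len E" if "E \<in> ?A" for E
    using \<open>finite ?A\<close> that by simp
  ultimately have "is_MST X E0" unfolding is_MST_def by auto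
  then show ?thesis unfolding some_MST_def by (rule someI)
qed

lemma total_len_nonneg: "is_graph V E \<Longrightarrow> 0 \<le> total_len E"
  unfolding total_len_def by (meson edge_len_pos less_imp_le sum_nonneg)

lemma L_SMT_le_total_len:
  assumes "is_tree V E" "X \<subseteq> V"
  shows "L_SMT X \<le> total_len E"
  unfolding L_SMT_def
proof (rule cInf_lower)
  show "bdd_below {total_len E |V E. is_tree V E \<and> X \<subseteq> V}"
    by (rule bdd_belowI[of _ 0]) (auto simp: is_tree_def intro: total_len_nonneg)
qed (use assms in blast)

lemma dist_le_L_SMT:
  assumes "finite X" "a \<in> X" "b \<in> X"
  shows "dist a b \<le> L_SMT X"
  unfolding L_SMT_def
proof (rule cInf_greatest)
  show "{total_len E |V E. is_tree V E \<and> X \<subseteq> V} \<noteq> {}"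
    using is_MST_some_MST[OF assms(1)] assms(2) unfolding is_MST_def by blast
  fix t assume "t \<in> {total_len E |V E. is_tree V E \<and> X \<subseteq> V}"
  then obtain V E where "t = total_len E" "is_tree V E" "X \<subseteq> V" by blast
  then show "dist a b \<le> t"
    using dist_le_total_len assms(2,3) unfolding is_tree_def connected_graph_def by blast
qed

lemma L_SMT_pos: "finite X \<Longrightarrow> 2 \<le> card X \<Longrightarrow> 0 < L_SMT X"
  by (metis two_distinct_points dist_le_L_SMT zero_less_dist_iff order_less_le_trans)

lemma bead_allocation_max_ge:
  fixes w :: "'a \<Rightarrow> real" and n :: "'a \<Rightarrow> nat"
  assumes "finite M" "M \<noteq> {}" "(\<Sum>e\<in>M. n e) = k"
  shows "(\<Sum>e\<in>M. w e) / (real k + real (card M)) \<le> Max ((\<lambda>e. w e / (real (n e) + 1)) ` M)"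
    (is "_ \<le> ?x")
proof -
  have "w e \<le> ?x * (real (n e) + 1)" if "e \<in> M" for e
  proof -
    have "w e / (real (n e) + 1) \<le> ?x" using assms(1) that by simp
    then show ?thesis by (simp add: divide_le_eq add_pos_nonneg)
  qed
  then have "(\<Sum>e\<in>M. w e) \<le> (\<Sum>e\<in>M. ?x * (real (n e) + 1))" by (rule sum_mono)
  also have "\<dots> = ?x * (real k + real (card M))"
    using assms(3) by (simp add: sum_distrib_left[symmetric] sum.distrib of_nat_sum[symmetric])
  finally have "(\<Sum>e\<in>M. w e) \<le> ?x * (real k + real (card M))" .
  moreover have "0 < real k + real (card M)"
    using assms(1,2) by (simp add: card_gt_0_iff add_nonneg_pos)
  ultimately show ?thesis by (simp add: pos_divide_le_eq)
qed

lemma bead_allocation_exists: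
  fixes w :: "'a \<Rightarrow> real"
  assumes fM: "finite M" and "M \<noteq> {}" and w: "\<forall>e\<in>M. 0 \<le> w e"
    and L: "0 < (\<Sum>e\<in>M. w e)" and k: "0 < k"
  shows "\<exists>n. (\<Sum>e\<in>M. n e) = k \<and>
              Max ((\<lambda>e. w e / (real (n e) + 1)) ` M) \<le> (\<Sum>e\<in>M. w e) / real k"
proof -
  define L where "L = (\<Sum>e\<in>M. w e)"
  obtain e0 where e0: "e0 \<in> M" using \<open>M \<noteq> {}\<close> by auto
  \<comment> \<open>allocate \<open>\<lfloor>k w e / L\<rfloor>\<close> beads to each \<open>e\<close> and the rounding deficit to \<open>e0\<close>\<close>
  define f where "f e = nat \<lfloor>real k * w e / L\<rfloor>" for e
  have f_bounds: "real (f e) \<le> real k * w e / L" "real k * w e / L < real (f e) + 1"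
    if "e \<in> M" for e
  proof -
    have "0 \<le> real k * w e / L" using w that L unfolding L_def by simp
    then show "real (f e) \<le> real k * w e / L" "real k * w e / L < real (f e) + 1"
      unfolding f_def by linarith+
  qed
  have "real (\<Sum>e\<in>M. f e) \<le> (\<Sum>e\<in>M. real k * w e / L)"
    unfolding of_nat_sum by (rule sum_mono) (rule f_bounds)
  also have "\<dots> = real k"
    using L unfolding L_def by (simp add: sum_divide_distrib[symmetric] sum_distrib_left[symmetric])
  finally have sum_f: "(\<Sum>e\<in>M. f e) \<le> k" by linarith
  define n where "n e = f e + (if e = e0 then k - (\<Sum>e\<in>M. f e) else 0)" for e
  have "(\<Sum>e\<in>M. n e) = k"
    unfolding n_def using sum_f by (simp add: sum.distrib sum.delta fM e0)
  moreover have "w e / (real (n e) + 1) \<le> L / real k" if "e \<in> M" for e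
  proof -
    have "real k * w e / L < real (n e) + 1" using f_bounds(2)[OF that] unfolding n_def by simp
    then have "real k * w e < L * (real (n e) + 1)"
      using L unfolding L_def by (simp add: divide_less_eq mult.commute)
    then show ?thesis
      using k by (simp add: divide_le_eq le_divide_eq add_pos_nonneg mult.commute mult.left_commute)
  qed
  ultimately show ?thesis unfolding L_def using fM \<open>M \<noteq> {}\<close> by auto
qed

lemma l_msth_bounds:
  assumes "finite X" "2 \<le> card X" "0 < k"
  shows "L_MST X / (real k + real (card (some_MST X))) \<le> l_msth X k"
    and "l_msth X k \<le> L_MST X / real k"
proof -
  let ?M = "some_MST X"
  let ?S = "{Max ((\<lambda>e. edge_len e / (real (n e) + 1)) ` ?M) | n :: pt set \<Rightarrow> nat.
              (\<Sum>e\<in>?M. n e) = k}"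
  obtain a b where ab: "a \<in> X" "b \<in> X" "a \<noteq> b" using two_distinct_points[OF assms(1,2)] .
  have M: "is_tree X ?M" using is_MST_some_MST[OF assms(1)] ab(1) unfolding is_MST_def by blast
  have gM: "is_graph X ?M" using M unfolding is_tree_def by simp
  have fM: "finite ?M" using is_graph_finite_edges[OF gM] .
  have neM: "?M \<noteq> {}" using is_tree_edges_nonempty[OF M ab] .
  have L: "L_MST X = (\<Sum>e\<in>?M. edge_len e)" unfolding L_MST_def total_len_def ..
  have "0 < L_MST X"
    using L_SMT_pos[OF assms(1,2)] L_SMT_le_total_len[OF M] unfolding L_MST_def by force
  then obtain n where n: "(\<Sum>e\<in>?M. n e) = k"
    "Max ((\<lambda>e. edge_len e / (real (n e) + 1)) ` ?M) \<le> L_MST X / real k"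
    using bead_allocation_exists[OF fM neM _ _ assms(3), of edge_len] edge_len_pos[OF gM]
    unfolding L by (meson less_imp_le)
  have lower: "L_MST X / (real k + real (card ?M)) \<le> x" if "x \<in> ?S" for x
    using that bead_allocation_max_ge[OF fM neM] unfolding L by blast
  show "L_MST X / (real k + real (card ?M)) \<le> l_msth X k"
    unfolding l_msth_def using n(1) by (intro cInf_greatest lower) blast+
  have "l_msth X k \<le> Max ((\<lambda>e. edge_len e / (real (n e) + 1)) ` ?M)"
    unfolding l_msth_def using n(1) by (intro cInf_lower bdd_belowI[of _ "L_MST X / (real k + real (card ?M))"] lower) blast+
  then show "l_msth X k \<le> L_MST X / real k" using n(2) by linarith
qed

definition bottleneck_values :: "pt set \<Rightarrow> nat \<Rightarrow> real set" where
  "bottleneck_values X k = {lmax E | V E S. is_tree V E \<and> V = X \<union> S \<and> finite S \<and> card S \<le> k}"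

lemma l_opt_eq_Inf: "l_opt X k = Inf (bottleneck_values X k)"
  unfolding l_opt_def bottleneck_values_def ..

lemma L_SMT_le_card_lmax:
  assumes "is_tree V E" "X \<subseteq> V" "E \<noteq> {}"
  shows "L_SMT X \<le> (real (card V) - 1) * lmax E"
proof -
  have g: "is_graph V E" and c: "connected_graph V E" using assms(1) unfolding is_tree_def by auto
  obtain T where T: "T \<subseteq> E" "is_tree V T" "card T + 1 = card V"
    using spanning_tree_exists[OF g c] assms(2,3) g unfolding is_graph_def by blast
  have "L_SMT X \<le> total_len T" using L_SMT_le_total_len[OF T(2) assms(2)] .
  also have "\<dots> \<le> real (card T) * lmax E"
    unfolding total_len_def lmax_def using is_graph_finite_edges[OF g] T(1)
    by (intro sum_bounded_above) auto
  finally show ?thesis using T(3)[symmetric] by simp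
qed

lemma bottleneck_value_ge:
  assumes "finite X" "2 \<le> card X" "x \<in> bottleneck_values X k"
  shows "L_SMT X / (real (card X) + real k) \<le> x"
proof -
  obtain a b where ab: "a \<in> X" "b \<in> X" "a \<noteq> b" using two_distinct_points[OF assms(1,2)] .
  obtain V E S where VE: "x = lmax E" "is_tree V E" "V = X \<union> S" "finite S" "card S \<le> k"
    using assms(3) unfolding bottleneck_values_def by blast
  have g: "is_graph V E" using VE(2) unfolding is_tree_def by simp
  have "E \<noteq> {}" using is_tree_edges_nonempty[OF VE(2), of a b] VE(3) ab by simp
  then obtain e where "e \<in> E" by blast
  then have "0 \<le> lmax E"
    using edge_len_pos[OF g] is_graph_finite_edges[OF g] unfolding lmax_def
    by (meson Max_ge finite_imageI image_eqI less_le_trans less_imp_le)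
  moreover have "real (card V) - 1 \<le> real (card X) + real k"
    using card_Un_le[of X S] VE(3,5) by simp
  ultimately have "L_SMT X \<le> (real (card X) + real k) * lmax E"
    using L_SMT_le_card_lmax[OF VE(2) _ \<open>E \<noteq> {}\<close>, of X] VE(3)
    by (meson Un_upper1 mult_right_mono order_trans)
  moreover have "0 < real (card X) + real k" using assms(2) by simp
  ultimately show ?thesis using VE(1) by (simp add: divide_le_eq mult.commute)
qed

lemma bdd_below_bottleneck_values:
  "finite X \<Longrightarrow> 2 \<le> card X \<Longrightarrow> bdd_below (bottleneck_values X k)"
  by (rule bdd_belowI) (rule bottleneck_value_ge)

lemma l_opt_ge:
  assumes "finite X" "2 \<le> card X"
  shows "L_SMT X / (real (card X) + real k) \<le> l_opt X k"
proof -
  have "lmax (some_MST X) \<in> bottleneck_values X k"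
    using is_MST_some_MST[OF assms(1)] assms(2) unfolding is_MST_def bottleneck_values_def
    by fastforce
  then show ?thesis
    unfolding l_opt_eq_Inf by (intro cInf_greatest bottleneck_value_ge[OF assms]) auto
qed

lemma l_opt_le_subdivision:
  assumes fX: "finite X" and cX: "2 \<le> card X" and VE: "is_tree V E" "X \<subseteq> V" and h: "0 < h"
    and k: "real (card V) + total_len E / h \<le> real k"
  shows "l_opt X k \<le> h"
proof -
  obtain a b where ab: "a \<in> X" "b \<in> X" "a \<noteq> b" using two_distinct_points[OF fX cX] .
  have g: "is_graph V E" and c: "connected_graph V E" using VE(1) unfolding is_tree_def by auto
  have fV: "finite V" using g unfolding is_graph_def by simp
  obtain V' T where T: "is_tree V' T" "V \<subseteq> V'" "real (card (V' - V)) \<le> total_len E / h"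
      "\<forall>e\<in>T. edge_len e \<le> h"
    using subdivided_tree_exists[OF g c h] ab(1) VE(2) by blast
  have fV': "finite V'" using T(1) unfolding is_tree_def is_graph_def by simp
  have "card (V' - X) \<le> card ((V' - V) \<union> V)" using fV fV' by (intro card_mono) auto
  then have "card (V' - X) \<le> card (V' - V) + card V" using card_Un_le le_trans by blast
  then have "card (V' - X) \<le> k" using T(3) k by linarith
  moreover have "V' = X \<union> (V' - X)" using T(2) VE(2) by blast
  ultimately have "lmax T \<in> bottleneck_values X k"
    unfolding bottleneck_values_def using T(1) fV' by blast
  then have "l_opt X k \<le> lmax T"
    unfolding l_opt_eq_Inf by (rule cInf_lower[OF _ bdd_below_bottleneck_values[OF fX cX]])
  also have "\<dots> \<le> h"
  proof -
    have "finite T" using T(1) is_graph_finite_edges unfolding is_tree_def by blast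
    moreover have "T \<noteq> {}" using is_tree_edges_nonempty[OF T(1), of a b] ab VE(2) T(2) by blast
    ultimately show ?thesis unfolding lmax_def using T(4) by simp
  qed
  finally show ?thesis .
qed

lemma l_opt_le:
  assumes fX: "finite X" and cX: "2 \<le> card X" and eps: "0 < \<epsilon>"
  shows "\<exists>c::nat. \<forall>k>c. l_opt X k \<le> (L_SMT X + \<epsilon>) / (real k - real c)"
proof -
  let ?S = "{total_len E | V E. is_tree V E \<and> X \<subseteq> V}"
  have ne: "?S \<noteq> {}"
    using is_MST_some_MST[OF fX] cX unfolding is_MST_def by fastforce
  have "Inf ?S < L_SMT X + \<epsilon>" unfolding L_SMT_def using eps by simp
  then obtain t where "t \<in> ?S" "t < L_SMT X + \<epsilon>" using cInf_lessD[OF ne] by blast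
  then obtain V E where VE: "is_tree V E" "X \<subseteq> V" "total_len E < L_SMT X + \<epsilon>" by blast
  have E_pos: "0 < total_len E"
    using L_SMT_pos[OF fX cX] L_SMT_le_total_len[OF VE(1,2)] by linarith
  show ?thesis
  proof (intro exI allI impI)
    fix k assume "card V < k"
    then have k: "0 < real k - real (card V)" by simp
    define h where "h = total_len E / (real k - real (card V))"
    have h: "0 < h" unfolding h_def using E_pos k by simp
    have "real (card V) + total_len E / h = real k" unfolding h_def using E_pos k by simp
    then have "l_opt X k \<le> h" using l_opt_le_subdivision[OF fX cX VE(1,2) h] by simp
    also have "\<dots> \<le> (L_SMT X + \<epsilon>) / (real k - real (card V))"
      unfolding h_def using VE(3) k by (simp add: divide_right_mono)
    finally show "l_opt X k \<le> (L_SMT X + \<epsilon>) / (real k - real (card V))" .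
  qed
qed

lemma tendsto_mult_l_msth:
  assumes "finite X" "2 \<le> card X"
  shows "(\<lambda>k. real k * l_msth X k) \<longlonglongrightarrow> L_MST X"
proof (rule tendsto_sandwich)
  let ?m = "real (card (some_MST X))"
  show "(\<lambda>k. real k * L_MST X / (real k + ?m)) \<longlonglongrightarrow> L_MST X" by real_asymp
  show "\<forall>\<^sub>F k in sequentially. real k * L_MST X / (real k + ?m) \<le> real k * l_msth X k"
    using eventually_gt_at_top[of 0]
  proof eventually_elim
    case (elim k)
    then show ?case using mult_left_mono[OF l_msth_bounds(1)[OF assms elim], of "real k"] by simp
  qed
  show "\<forall>\<^sub>F k in sequentially. real k * l_msth X k \<le> L_MST X"
    using eventually_gt_at_top[of 0]
  proof eventually_elim
    case (elim k)
    then show ?case using mult_left_mono[OF l_msth_bounds(2)[OF assms elim], of "real k"] by simp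
  qed
qed simp

lemma tendsto_mult_l_opt:
  assumes "finite X" "2 \<le> card X"
  shows "(\<lambda>k. real k * l_opt X k) \<longlonglongrightarrow> L_SMT X"
proof (rule order_tendstoI)
  fix y assume "y < L_SMT X"
  moreover have "(\<lambda>k. real k * L_SMT X / (real (card X) + real k)) \<longlonglongrightarrow> L_SMT X" by real_asymp
  ultimately have "\<forall>\<^sub>F k in sequentially. y < real k * L_SMT X / (real (card X) + real k)"
    by (rule order_tendstoD(1)[rotated])
  then show "\<forall>\<^sub>F k in sequentially. y < real k * l_opt X k"
  proof eventually_elim
    case (elim k)
    then show ?case using mult_left_mono[OF l_opt_ge[OF assms, of k], of "real k"] by simp
  qed
next
  fix y assume y: "L_SMT X < y"
  define \<epsilon> where "\<epsilon> = (y - L_SMT X) / 2"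
  have "0 < \<epsilon>" unfolding \<epsilon>_def using y by simp
  then obtain c :: nat where c: "\<And>k. c < k \<Longrightarrow> l_opt X k \<le> (L_SMT X + \<epsilon>) / (real k - real c)"
    using l_opt_le[OF assms] by blast
  have "(\<lambda>k. real k * (L_SMT X + \<epsilon>) / (real k - real c)) \<longlonglongrightarrow> L_SMT X + \<epsilon>"
    by real_asymp
  moreover have "L_SMT X + \<epsilon> < y" unfolding \<epsilon>_def using y by (simp add: field_simps)
  ultimately have "\<forall>\<^sub>F k in sequentially. real k * (L_SMT X + \<epsilon>) / (real k - real c) < y"
    by (rule order_tendstoD(2))
  then show "\<forall>\<^sub>F k in sequentially. real k * l_opt X k < y"
    using eventually_gt_at_top[of c]
  proof eventually_elim
    case (elim k)
    then show ?case using mult_left_mono[OF c[OF elim(2)], of "real k"] by simp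
  qed
qed

theorem lemma2:
  fixes X :: "(real^2) set"
  assumes "finite X" and "card X \<ge> 2"
  shows "(\<lambda>k. l_msth X k / l_opt X k) \<longlonglongrightarrow> L_MST X / L_SMT X"
proof -
  have "\<forall>\<^sub>F k in sequentially.
      (real k * l_msth X k) / (real k * l_opt X k) = l_msth X k / l_opt X k"
    using eventually_gt_at_top[of 0] by eventually_elim simp
  moreover have "(\<lambda>k. (real k * l_msth X k) / (real k * l_opt X k)) \<longlonglongrightarrow> L_MST X / L_SMT X"
    using tendsto_divide[OF tendsto_mult_l_msth[OF assms] tendsto_mult_l_opt[OF assms]]
      L_SMT_pos[OF assms] by simp
  ultimately show ?thesis by (rule tendsto_cong[THEN iffD1])
qed

end
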